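(* An element $f\in C(X)_\mathcal{P}$ is clean (i.e. $f=u+e$ with $u$ a unit and $e$ an idempotent of $C(X)_\mathcal{P}$) if and only if there exists a $\tau\mathcal{P}$-clopen subset $U$ of $X$ such that $f^{-1}(\{1\})\subseteq U\subseteq X\setminus Z_\mathcal{P}(f)$.
   Context: Let $(X,\tau)$ be a $T_1$ topological space and $\mathcal{P}$ an ideal of closed subsets of $X$ (a nonempty family of closed sets closed under finite unions and under taking closed subsets). For $f\colon X\to\mathbb{R}$, $D_f$ denotes the set of points of discontinuity of $f$, and $C(X)_\mathcal{P}=\{f\colon X\to\mathbb{R} : \overline{D_f}\in\mathcal{P}\}$, a commutative ring with unity under pointwise operations. For $f\in C(X)_\mathcal{P}$, $Z_\mathcal{P}(f)=\{x: f(x)=0\}$. A set $U\subseteq X$ is $\tau\mathcal{P}$-clopen if $U=Z_\mathcal{P}(f)=X\setminus Z_\mathcal{P}(g)$ for some $f,g\in C(X)_\mathcal{P}$. *)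

theory Defs
  imports "HOL-Analysis.Analysis"
begin

text \<open>The T1 space X is the type 'a of class t1_space (X = UNIV).\<close>

definition closed_ideal :: "'a::topological_space set set \<Rightarrow> bool" where
  "closed_ideal P \<longleftrightarrow> P \<noteq> {} \<and> (\<forall>A\<in>P. closed A)
     \<and> (\<forall>A\<in>P. \<forall>B\<in>P. A \<union> B \<in> P)
     \<and> (\<forall>A\<in>P. \<forall>B. closed B \<and> B \<subseteq> A \<longrightarrow> B \<in> P)"

definition discont :: "('a::topological_space \<Rightarrow> real) \<Rightarrow> 'a set" where
  "discont f = {x. \<not> (f \<longlongrightarrow> f x) (at x)}"

definition CP :: "'a::topological_space set set \<Rightarrow> ('a \<Rightarrow> real) set" where
  "CP P = {f. closure (discont f) \<in> P}"

definition ZP :: "('a \<Rightarrow> real) \<Rightarrow> 'a set" where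
  "ZP f = {x. f x = 0}"

definition tauP_clopen :: "'a::topological_space set set \<Rightarrow> 'a set \<Rightarrow> bool" where
  "tauP_clopen P U \<longleftrightarrow> (\<exists>f\<in>CP P. \<exists>g\<in>CP P. U = ZP f \<and> U = UNIV - ZP g)"

definition CP_unit :: "'a::topological_space set set \<Rightarrow> ('a \<Rightarrow> real) \<Rightarrow> bool" where
  "CP_unit P u \<longleftrightarrow> u \<in> CP P \<and> (\<exists>v\<in>CP P. (\<lambda>x. u x * v x) = (\<lambda>x. 1))"

definition CP_idempotent :: "'a::topological_space set set \<Rightarrow> ('a \<Rightarrow> real) \<Rightarrow> bool" where
  "CP_idempotent P e \<longleftrightarrow> e \<in> CP P \<and> (\<lambda>x. e x * e x) = e"

definition CP_clean :: "'a::topological_space set set \<Rightarrow> ('a \<Rightarrow> real) \<Rightarrow> bool" where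
  "CP_clean P f \<longleftrightarrow> (\<exists>u e. CP_unit P u \<and> CP_idempotent P e \<and> f = (\<lambda>x. u x + e x))"

end

theory Submission
  imports Defs
begin

text \<open>A unit of \<open>C(X)\<^sub>P\<close> is exactly a nowhere vanishing element, and an idempotent is exactly the
  indicator of the complement of a \<open>\<tau>P\<close>-clopen set \<open>U\<close>. Given \<open>f\<close> and \<open>U\<close> with
  \<open>f\<^sup>-\<^sup>1{1} \<subseteq> U \<subseteq> X - Z(f)\<close>, the function \<open>f - 1\<^bsub>X-U\<^esub>\<close> vanishes nowhere, so \<open>f\<close> is clean;
  conversely, if \<open>f = u + e\<close> then \<open>U = Z(e)\<close> works.\<close>

lemma CP_if_discont_subset:
  assumes P: "closed_ideal P" and "a \<in> CP P" "b \<in> CP P"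
    and "discont c \<subseteq> discont a \<union> discont b"
  shows "c \<in> CP P"
proof -
  have "closure (discont c) \<subseteq> closure (discont a) \<union> closure (discont b)"
    using assms(4) by (metis closure_Un closure_mono)
  moreover have "closure (discont a) \<union> closure (discont b) \<in> P"
    using P assms(2,3) unfolding closed_ideal_def CP_def by blast
  ultimately show ?thesis
    using P unfolding closed_ideal_def CP_def by blast
qed

lemma discont_diff: "discont (\<lambda>x. f x - g x) \<subseteq> discont f \<union> discont g"
  unfolding discont_def by (auto intro: tendsto_diff)

lemma discont_inverse:
  assumes "\<And>x. u x \<noteq> 0"
  shows "discont (\<lambda>x. inverse (u x)) \<subseteq> discont u"
  unfolding discont_def using assms by (auto intro: tendsto_inverse)

lemma CP_diff:
  assumes "closed_ideal P" "f \<in> CP P" "g \<in> CP P"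
  shows "(\<lambda>x. f x - g x) \<in> CP P"
  using CP_if_discont_subset[OF assms discont_diff] .

lemma CP_one_minus:
  assumes "closed_ideal P" "e \<in> CP P"
  shows "(\<lambda>x. 1 - e x) \<in> CP P"
  by (rule CP_if_discont_subset[OF assms assms(2)]) (auto simp: discont_def intro: tendsto_diff)

lemma CP_unit_iff:
  assumes "closed_ideal P"
  shows "CP_unit P u \<longleftrightarrow> u \<in> CP P \<and> (\<forall>x. u x \<noteq> 0)"
proof
  assume "CP_unit P u"
  then obtain v where "u \<in> CP P" "(\<lambda>x. u x * v x) = (\<lambda>x. 1)"
    unfolding CP_unit_def by blast
  then have "u x * v x = 1" for x
    by (metis (mono_tags))
  with \<open>u \<in> CP P\<close> show "u \<in> CP P \<and> (\<forall>x. u x \<noteq> 0)"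
    by (metis zero_neq_one mult_zero_left)
next
  assume u: "u \<in> CP P \<and> (\<forall>x. u x \<noteq> 0)"
  then have "(\<lambda>x. inverse (u x)) \<in> CP P"
    using CP_if_discont_subset[OF assms, of u u] discont_inverse[of u] by blast
  with u show "CP_unit P u"
    unfolding CP_unit_def by (intro conjI bexI[of _ "\<lambda>x. inverse (u x)"]) auto
qed

lemma CP_idempotent_iff:
  "CP_idempotent P e \<longleftrightarrow> e \<in> CP P \<and> (\<forall>x. e x = 0 \<or> e x = 1)"
proof -
  have "e x * e x = e x \<longleftrightarrow> e x = 0 \<or> e x = 1" for x
    by (metis mult_cancel_right1 mult_zero_left)
  then show ?thesis
    unfolding CP_idempotent_def fun_eq_iff by blast
qed

lemma tauP_clopen_ZP_idempotent:
  assumes "closed_ideal P" "CP_idempotent P e"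
  shows "tauP_clopen P (ZP e)"
proof -
  have e: "e \<in> CP P" "\<And>x. e x = 0 \<or> e x = 1"
    using assms(2) CP_idempotent_iff by blast+
  have "ZP e = UNIV - ZP (\<lambda>x. 1 - e x)"
    using e(2) by (force simp: ZP_def)
  then show ?thesis
    unfolding tauP_clopen_def using e(1) CP_one_minus[OF assms(1) e(1)] by blast
qed

text \<open>The indicator of the complement of \<open>U\<close> is continuous at every point where both functions
  witnessing that \<open>U\<close> is \<open>\<tau>P\<close>-clopen are: the nonvanishing one keeps the indicator locally constant.\<close>

lemma discont_indicator_tauP_clopen:
  assumes "U = ZP g" "U = UNIV - ZP h"
  shows "discont (\<lambda>x. if x \<in> U then 0 else 1 :: real) \<subseteq> discont g \<union> discont h"
proof
  fix x
  assume "x \<in> discont (\<lambda>x. if x \<in> U then 0 else 1 :: real)"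
  then have not_lim: "\<not> ((\<lambda>y. if y \<in> U then 0 else 1 :: real) \<longlongrightarrow> (if x \<in> U then 0 else 1)) (at x)"
    unfolding discont_def by simp
  show "x \<in> discont g \<union> discont h"
  proof (rule ccontr)
    assume "x \<notin> discont g \<union> discont h"
    then have g: "(g \<longlongrightarrow> g x) (at x)" and h: "(h \<longlongrightarrow> h x) (at x)"
      unfolding discont_def by auto
    have "eventually (\<lambda>y. y \<in> U \<longleftrightarrow> x \<in> U) (at x)"
    proof (cases "x \<in> U")
      case True
      then have "h x \<noteq> 0" using assms by (auto simp: ZP_def)
      then have "eventually (\<lambda>y. h y \<noteq> 0) (at x)"
        using h tendsto_imp_eventually_ne by blast
      then show ?thesis
        by (rule eventually_mono) (use assms True in \<open>auto simp: ZP_def\<close>)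
    next
      case False
      then have "g x \<noteq> 0" using assms by (auto simp: ZP_def)
      then have "eventually (\<lambda>y. g y \<noteq> 0) (at x)"
        using g tendsto_imp_eventually_ne by blast
      then show ?thesis
        by (rule eventually_mono) (use assms False in \<open>auto simp: ZP_def\<close>)
    qed
    then have "eventually (\<lambda>y. (if y \<in> U then 0 else 1 :: real) = (if x \<in> U then 0 else 1)) (at x)"
      by (rule eventually_mono) simp
    then have "((\<lambda>y. if y \<in> U then 0 else 1 :: real) \<longlongrightarrow> (if x \<in> U then 0 else 1)) (at x)"
      by (rule tendsto_eventually)
    with not_lim show False ..
  qed
qed

lemma CP_idempotent_indicator_tauP_clopen:
  assumes "closed_ideal P" "tauP_clopen P U"
  shows "CP_idempotent P (\<lambda>x. if x \<in> U then 0 else 1)"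
proof -
  obtain g h where "g \<in> CP P" "h \<in> CP P" "U = ZP g" "U = UNIV - ZP h"
    using assms(2) unfolding tauP_clopen_def by blast
  then have "(\<lambda>x. if x \<in> U then 0 else 1 :: real) \<in> CP P"
    using CP_if_discont_subset[OF assms(1)] discont_indicator_tauP_clopen by blast
  then show ?thesis
    unfolding CP_idempotent_iff by simp
qed

theorem theorem3p4:
  fixes P :: "'a::t1_space set set" and f :: "'a \<Rightarrow> real"
  assumes "closed_ideal P" and "f \<in> CP P"
  shows "CP_clean P f \<longleftrightarrow>
    (\<exists>U. tauP_clopen P U \<and> f -` {1} \<subseteq> U \<and> U \<subseteq> UNIV - ZP f)"
proof
  assume "CP_clean P f"
  then obtain u e where u: "CP_unit P u" and e: "CP_idempotent P e" and f: "f = (\<lambda>x. u x + e x)"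
    unfolding CP_clean_def by blast
  have "\<forall>x. u x \<noteq> 0" "\<forall>x. e x = 0 \<or> e x = 1"
    using u e CP_unit_iff[OF assms(1)] CP_idempotent_iff by blast+
  then have "f -` {1} \<subseteq> ZP e" "ZP e \<subseteq> UNIV - ZP f"
    using f by (force simp: ZP_def)+
  with tauP_clopen_ZP_idempotent[OF assms(1) e]
  show "\<exists>U. tauP_clopen P U \<and> f -` {1} \<subseteq> U \<and> U \<subseteq> UNIV - ZP f" by blast
next
  assume "\<exists>U. tauP_clopen P U \<and> f -` {1} \<subseteq> U \<and> U \<subseteq> UNIV - ZP f"
  then obtain U where U: "tauP_clopen P U" "f -` {1} \<subseteq> U" "U \<subseteq> UNIV - ZP f" by blast
  define e where "e = (\<lambda>x. if x \<in> U then 0 else 1 :: real)"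
  have e: "CP_idempotent P e"
    unfolding e_def using CP_idempotent_indicator_tauP_clopen[OF assms(1) U(1)] .
  then have "(\<lambda>x. f x - e x) \<in> CP P"
    using CP_diff[OF assms] CP_idempotent_iff by blast
  moreover have "f x - e x \<noteq> 0" for x
    using U(2,3) by (cases "x \<in> U") (auto simp: e_def ZP_def)
  ultimately have "CP_unit P (\<lambda>x. f x - e x)"
    using CP_unit_iff[OF assms(1)] by blast
  with e show "CP_clean P f"
    unfolding CP_clean_def by (intro exI[of _ "\<lambda>x. f x - e x"] exI[of _ e]) auto
qed

end
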